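(* Let $n>2k$ be integers with $k\ge 2$, $X=\{1,\dots,n\}$, let $\mathcal F\subset\binom{X}{k}$ be a saturated intersecting family, $\mathcal B=\mathcal B(\mathcal F)$, and $t=\min\{|B|\colon B\in\mathcal B\}$, and assume $t\ge 2$. For $t\le \ell\le k$ let $\mathcal F_\ell$ be the set of $F\in\mathcal F$ with $\max\{|B|\colon B\in\mathcal B,\ B\subset F\}=\ell$, and let $$\mathcal I_\ell=\{F\cap F'\colon F\in\mathcal F_\ell,\ F'\in\mathcal F_t\cup\dots\cup\mathcal F_\ell\}.$$ Then for every $\ell$ with $t\le\ell\le k$ and $\tau(\mathcal B^{(\le\ell)})\ge 2$, $$|\mathcal I_\ell|\le (2^\ell-1)\,|\mathcal B^{(\ell)}|\sum_{0\le i\le k-\ell}\binom{n}{i} < 2^\ell\,\ell^2 k^{\ell-2}\sum_{0\le i\le k-\ell}\binom{n}{i}.$$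
   Context: $\binom{X}{k}$ is the family of $k$-subsets of $X$. A family is intersecting if any two of its members intersect. For $\mathcal G\subset 2^X$, $\mathcal T(\mathcal G):=\{T\subset X\colon |T|\le k,\ T\cap G\neq\emptyset \text{ for all } G\in\mathcal G\}$. An intersecting family $\mathcal F\subset\binom{X}{k}$ is saturated if for every $G\in\binom{X}{k}\setminus\mathcal F$ the family $\mathcal F\cup\{G\}$ is not intersecting. $\mathcal B(\mathcal F)$ denotes the family of inclusion-minimal members of $\mathcal T(\mathcal F)$. For a family $\mathcal H$, $\mathcal H^{(i)}:=\{H\in\mathcal H\colon |H|=i\}$ and $\mathcal H^{(\le \ell)}:=\bigcup_{i=1}^{\ell}\mathcal H^{(i)}$. The covering number $\tau(\mathcal H)$ is the minimum size of a set $T$ with $T\cap H\neq\emptyset$ for all $H\in\mathcal H$. *)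

theory Defs
  imports Main
begin

definition intersecting :: "'a set set \<Rightarrow> bool" where
  "intersecting \<F> \<longleftrightarrow> (\<forall>A\<in>\<F>. \<forall>B\<in>\<F>. A \<inter> B \<noteq> {})"

definition ksubsets :: "'a set \<Rightarrow> nat \<Rightarrow> 'a set set" where
  "ksubsets X k = {A. A \<subseteq> X \<and> card A = k}"

definition saturated :: "'a set \<Rightarrow> nat \<Rightarrow> 'a set set \<Rightarrow> bool" where
  "saturated X k \<F> \<longleftrightarrow> \<F> \<subseteq> ksubsets X k \<and> intersecting \<F> \<and>
     (\<forall>G \<in> ksubsets X k - \<F>. \<not> intersecting (\<F> \<union> {G}))"

definition transv :: "'a set \<Rightarrow> nat \<Rightarrow> 'a set set \<Rightarrow> 'a set set" where
  "transv X k \<G> = {T. T \<subseteq> X \<and> card T \<le> k \<and> (\<forall>G\<in>\<G>. T \<inter> G \<noteq> {})}"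

definition minTransv :: "'a set \<Rightarrow> nat \<Rightarrow> 'a set set \<Rightarrow> 'a set set" where
  "minTransv X k \<F> = {T \<in> transv X k \<F>. \<forall>S \<in> transv X k \<F>. S \<subseteq> T \<longrightarrow> S = T}"

definition layer :: "'a set set \<Rightarrow> nat \<Rightarrow> 'a set set" where
  "layer \<H> i = {H \<in> \<H>. card H = i}"

definition layer_le :: "'a set set \<Rightarrow> nat \<Rightarrow> 'a set set" where
  "layer_le \<H> l = {H \<in> \<H>. 1 \<le> card H \<and> card H \<le> l}"

definition cover_number :: "'a set set \<Rightarrow> nat" where
  "cover_number \<H> = (LEAST m. \<exists>T. finite T \<and> card T = m \<and> (\<forall>H\<in>\<H>. T \<inter> H \<noteq> {}))"

end

theory Submission
  imports Defs
begin

text \<open>A member of \<open>\<I>\<close> is \<open>F \<inter> F'\<close> where \<open>F\<close> contains a minimal transversal \<open>B\<close>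
  with \<open>|B| = l\<close>. It splits as \<open>(B \<inter> F') \<union> ((F - B) \<inter> F')\<close>: a nonempty subset of \<open>B\<close>
  (which meets \<open>F'\<close>) together with at most \<open>k - l\<close> further elements. This gives the
  first bound. The second is a branching argument on the \<open>l\<close>-element minimal transversals:
  a set \<open>S\<close> with \<open>|S| \<le> 1\<close> is missed by some \<open>H \<in> \<B>\<close> with \<open>|H| \<le> l\<close> because \<open>\<tau> \<ge> 2\<close>, and
  \<open>H\<close> meets every member of \<open>\<B>\<close> because for \<open>n \<ge> 2k\<close> any two transversals of a
  saturated family intersect; a proper subset of a minimal transversal is not a
  transversal, so it is missed by some \<open>F \<in> \<F>\<close>, which has \<open>k\<close> elements. Growing sets one
  element at a time, with at most \<open>l, l, k, k, \<dots>\<close> choices at the successive steps, reaches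
  every \<open>l\<close>-element minimal transversal, so there are at most \<open>l\<^sup>2 \<cdot> k ^ (l - 2)\<close> of them.\<close>

lemma card_subsets_card_le:
  assumes "finite X"
  shows "card {T. T \<subseteq> X \<and> card T \<le> m} = (\<Sum>i\<in>{0..m}. card X choose i)"
proof -
  have "{T. T \<subseteq> X \<and> card T \<le> m} = (\<Union>i\<in>{0..m}. {T. T \<subseteq> X \<and> card T = i})" by auto
  also have "card \<dots> = (\<Sum>i\<in>{0..m}. card {T. T \<subseteq> X \<and> card T = i})"
    using assms by (intro card_UN_disjoint) (auto intro: finite_subset[of _ "Pow X"])
  finally show ?thesis using n_subsets[OF assms] by simp
qed

lemma card_nonempty_subset_unions_le:
  assumes "finite P" "\<And>B. B \<in> P \<Longrightarrow> finite B \<and> card B = l" "finite \<T>"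
  shows "card {S \<union> T | B S T. B \<in> P \<and> S \<subseteq> B \<and> S \<noteq> {} \<and> T \<in> \<T>}
           \<le> (2 ^ l - 1) * card P * card \<T>"
proof -
  have "{S \<union> T | B S T. B \<in> P \<and> S \<subseteq> B \<and> S \<noteq> {} \<and> T \<in> \<T>}
        = (\<Union>B\<in>P. \<Union>S\<in>Pow B - {{}}. (\<lambda>T. S \<union> T) ` \<T>)" by blast
  also have "card \<dots> \<le> (\<Sum>B\<in>P. card (\<Union>S\<in>Pow B - {{}}. (\<lambda>T. S \<union> T) ` \<T>))"
    using assms(1) by (rule card_UN_le)
  also have "\<dots> \<le> (\<Sum>B\<in>P. (2 ^ l - 1) * card \<T>)"
  proof (rule sum_mono)
    fix B assume "B \<in> P"
    then have "card (Pow B - {{}}) = 2 ^ l - 1"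
      using assms(2) by (simp add: card_Pow)
    have "card (\<Union>S\<in>Pow B - {{}}. (\<lambda>T. S \<union> T) ` \<T>)
        \<le> (\<Sum>S\<in>Pow B - {{}}. card ((\<lambda>T. S \<union> T) ` \<T>))"
      using \<open>B \<in> P\<close> assms(2) by (intro card_UN_le) simp
    also have "\<dots> \<le> (\<Sum>S\<in>Pow B - {{}}. card \<T>)"
      using assms(3) by (intro sum_mono card_image_le)
    finally show "card (\<Union>S\<in>Pow B - {{}}. (\<lambda>T. S \<union> T) ` \<T>) \<le> (2 ^ l - 1) * card \<T>"
      using \<open>card (Pow B - {{}}) = 2 ^ l - 1\<close> by simp
  qed
  finally show ?thesis by (simp add: ac_simps)
qed

lemma prod_lessThan_if_less_two:
  "(\<Prod>j<Suc (Suc i). if j < 2 then a else b) = (a::nat) ^ 2 * b ^ i"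
  by (induction i) (auto simp: power2_eq_square)

lemma cover_number_ge_2_imp_disjoint:
  assumes "2 \<le> cover_number \<H>" "finite S" "card S \<le> 1"
  shows "\<exists>H\<in>\<H>. H \<inter> S = {}"
proof (rule ccontr)
  assume "\<not> (\<exists>H\<in>\<H>. H \<inter> S = {})"
  then have "cover_number \<H> \<le> card S"
    unfolding cover_number_def by (intro Least_le exI[of _ S]) (use \<open>finite S\<close> in blast)
  with assms show False by simp
qed

lemma branching_step:
  assumes "finite \<S>" and size: "\<And>S. S \<in> \<S> \<Longrightarrow> finite S \<and> card S = j"
    and cover: "\<And>B. B \<in> P \<Longrightarrow> \<exists>S\<in>\<S>. S \<subseteq> B"
    and branch: "\<forall>S\<in>\<S>. \<exists>A. finite A \<and> card A \<le> m \<and> A \<inter> S = {}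
                                     \<and> (\<forall>B\<in>P. S \<subseteq> B \<longrightarrow> A \<inter> B \<noteq> {})"
  shows "\<exists>\<S>'. finite \<S>' \<and> card \<S>' \<le> m * card \<S> \<and> (\<forall>S\<in>\<S>'. finite S \<and> card S = Suc j)
              \<and> (\<forall>B\<in>P. \<exists>S\<in>\<S>'. S \<subseteq> B)"
proof -
  obtain A where A: "\<forall>S\<in>\<S>. finite (A S) \<and> card (A S) \<le> m \<and> A S \<inter> S = {}
                                     \<and> (\<forall>B\<in>P. S \<subseteq> B \<longrightarrow> A S \<inter> B \<noteq> {})"
    using bchoice[OF branch] by blast
  define \<S>' where "\<S>' = (\<Union>S\<in>\<S>. (\<lambda>x. insert x S) ` A S)"
  have "card \<S>' \<le> (\<Sum>S\<in>\<S>. card ((\<lambda>x. insert x S) ` A S))"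
    unfolding \<S>'_def using \<open>finite \<S>\<close> by (rule card_UN_le)
  also have "\<dots> \<le> (\<Sum>S\<in>\<S>. m)"
    using A by (intro sum_mono) (meson card_image_le le_trans)
  also have "\<dots> = m * card \<S>" by simp
  finally have "card \<S>' \<le> m * card \<S>" .
  moreover have "finite \<S>'" unfolding \<S>'_def using \<open>finite \<S>\<close> A by simp
  moreover have "\<forall>S\<in>\<S>'. finite S \<and> card S = Suc j"
    unfolding \<S>'_def using A size by (auto simp: disjoint_iff)
  moreover have "\<exists>S\<in>\<S>'. S \<subseteq> B" if "B \<in> P" for B
  proof -
    obtain S where S: "S \<in> \<S>" "S \<subseteq> B" using cover \<open>B \<in> P\<close> by blast
    then have "A S \<inter> B \<noteq> {}" using A \<open>B \<in> P\<close> by blast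
    then obtain x where "x \<in> A S" "x \<in> B" by blast
    then have "insert x S \<in> \<S>'" "insert x S \<subseteq> B" unfolding \<S>'_def using S by auto
    then show ?thesis by blast
  qed
  ultimately show ?thesis by (intro exI[of _ \<S>'] conjI ballI) auto
qed

context
  fixes P :: "'a set set" and l :: nat and m :: "nat \<Rightarrow> nat"
  assumes size: "\<And>B. B \<in> P \<Longrightarrow> finite B \<and> card B = l"
    and branch: "\<And>S B. B \<in> P \<Longrightarrow> S \<subseteq> B \<Longrightarrow> card S < l \<Longrightarrow>
        \<exists>A. finite A \<and> card A \<le> m (card S) \<and> A \<inter> S = {} \<and> (\<forall>B'\<in>P. S \<subseteq> B' \<longrightarrow> A \<inter> B' \<noteq> {})"
begin

lemma branching_cover:
  assumes "j \<le> l"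
  shows "\<exists>\<S>. finite \<S> \<and> card \<S> \<le> (\<Prod>i<j. m i) \<and> (\<forall>S\<in>\<S>. finite S \<and> card S = j)
             \<and> (\<forall>B\<in>P. \<exists>S\<in>\<S>. S \<subseteq> B)"
  using \<open>j \<le> l\<close>
proof (induction j)
  case 0
  show ?case by (intro exI[of _ "{{}}"]) simp
next
  case (Suc j)
  then obtain \<S> where \<S>: "finite \<S>" "card \<S> \<le> (\<Prod>i<j. m i)"
    "\<forall>S\<in>\<S>. finite S \<and> card S = j" "\<forall>B\<in>P. \<exists>S\<in>\<S>. S \<subseteq> B"
    by auto
  have "\<exists>A. finite A \<and> card A \<le> m j \<and> A \<inter> S = {} \<and> (\<forall>B\<in>P. S \<subseteq> B \<longrightarrow> A \<inter> B \<noteq> {})"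
    if "S \<in> \<S>" for S
  proof (cases "\<exists>B\<in>P. S \<subseteq> B")
    case True
    then obtain B where "B \<in> P" "S \<subseteq> B" by blast
    moreover have "card S = j" using \<S>(3) that by blast
    ultimately show ?thesis using branch[of B S] Suc.prems by simp
  next
    case False
    then show ?thesis by (intro exI[of _ "{}"]) auto
  qed
  then obtain \<S>' where \<S>': "finite \<S>'" "card \<S>' \<le> m j * card \<S>"
    "\<forall>S\<in>\<S>'. finite S \<and> card S = Suc j" "\<forall>B\<in>P. \<exists>S\<in>\<S>'. S \<subseteq> B"
    using branching_step[of \<S> j P "m j"] \<S>(1,3,4) by blast
  have "card \<S>' \<le> m j * (\<Prod>i<j. m i)"
    using \<S>'(2) mult_le_mono2[OF \<S>(2)] by (rule order_trans)
  then have "card \<S>' \<le> (\<Prod>i<Suc j. m i)" by (simp add: mult.commute)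
  with \<S>' show ?case by blast
qed

lemma card_le_prod_by_branching: "card P \<le> (\<Prod>j<l. m j)"
proof -
  obtain \<S> where \<S>: "finite \<S>" "card \<S> \<le> (\<Prod>j<l. m j)" "\<forall>S\<in>\<S>. finite S \<and> card S = l"
    "\<forall>B\<in>P. \<exists>S\<in>\<S>. S \<subseteq> B"
    using branching_cover[OF order_refl] by blast
  have "P \<subseteq> \<S>"
  proof
    fix B assume "B \<in> P"
    then obtain S where "S \<in> \<S>" "S \<subseteq> B" using \<S>(4) by blast
    moreover have "S = B"
      using card_subset_eq[of B S] calculation \<S>(3) size[OF \<open>B \<in> P\<close>] by simp
    ultimately show "B \<in> \<S>" by simp
  qed
  then have "card P \<le> card \<S>" using \<S>(1) by (intro card_mono)
  with \<S>(2) show ?thesis by linarith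
qed

end

lemma exists_minTransv_subset:
  assumes "T \<in> transv X k \<G>" "finite X"
  shows "\<exists>B\<in>minTransv X k \<G>. B \<subseteq> T"
proof -
  let ?P = "\<lambda>S. S \<in> transv X k \<G> \<and> S \<subseteq> T"
  obtain S0 where S0: "?P S0" and least: "\<And>S. ?P S \<Longrightarrow> card S0 \<le> card S"
    using ex_has_least_nat[of ?P T card] assms(1) by blast
  have "finite S0"
    using S0 assms(2) unfolding transv_def by (blast intro: finite_subset)
  have "S0 \<in> minTransv X k \<G>"
    unfolding minTransv_def
  proof (intro CollectI conjI ballI impI)
    show "S0 \<in> transv X k \<G>" using S0 by blast
    fix S assume "S \<in> transv X k \<G>" "S \<subseteq> S0"
    then show "S = S0"
      using S0 least[of S] \<open>finite S0\<close> by (metis card_seteq order_trans)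
  qed
  then show ?thesis using S0 by blast
qed

lemma minTransv_psubset_misses:
  assumes "B \<in> minTransv X k \<G>" "S \<subset> B" "finite X"
  shows "\<exists>G\<in>\<G>. S \<inter> G = {}"
proof -
  have B: "B \<subseteq> X" "card B \<le> k" "\<forall>T\<in>transv X k \<G>. T \<subseteq> B \<longrightarrow> T = B"
    using assms(1) unfolding minTransv_def transv_def by auto
  then have "card S \<le> k"
    using psubset_card_mono[OF finite_subset[OF B(1) \<open>finite X\<close>] \<open>S \<subset> B\<close>] by simp
  moreover have "S \<notin> transv X k \<G>" using B(3) \<open>S \<subset> B\<close> by blast
  ultimately show ?thesis using B(1) \<open>S \<subset> B\<close> unfolding transv_def by blast
qed

lemma saturated_memberD:
  assumes "saturated X k \<F>" "F \<in> \<F>"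
  shows "F \<subseteq> X" "card F = k"
  using assms by (auto simp: saturated_def ksubsets_def)

lemma saturated_member_transv:
  assumes "saturated X k \<F>" "F \<in> \<F>"
  shows "F \<in> transv X k \<F>"
proof -
  have "intersecting \<F>" using assms(1) by (simp add: saturated_def)
  then show ?thesis
    using saturated_memberD[OF assms] assms(2) unfolding intersecting_def transv_def by auto
qed

text \<open>Padding \<open>B1\<close> with elements outside \<open>B1 \<union> B2\<close> to a \<open>k\<close>-set gives a set meeting all
  of \<open>\<F>\<close>, which by saturation belongs to \<open>\<F>\<close> and hence meets \<open>B2\<close>; as the padding
  avoids \<open>B2\<close>, so does \<open>B1\<close>.\<close>

lemma saturated_transv_intersect:
  assumes sat: "saturated X k \<F>" and "finite X" "2 * k \<le> card X" "1 \<le> k"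
    and B1: "B1 \<in> transv X k \<F>" and B2: "B2 \<in> transv X k \<F>"
  shows "B1 \<inter> B2 \<noteq> {}"
proof
  assume disj: "B1 \<inter> B2 = {}"
  have sub: "B1 \<subseteq> X" "card B1 \<le> k" "B2 \<subseteq> X" "card B2 \<le> k"
    using B1 B2 unfolding transv_def by auto
  then have fin: "finite B1" "finite B2" using \<open>finite X\<close> finite_subset by auto
  have "card (X - (B1 \<union> B2)) = card X - card (B1 \<union> B2)"
    using sub fin by (intro card_Diff_subset) auto
  also have "card (B1 \<union> B2) = card B1 + card B2"
    using fin disj by (rule card_Un_disjoint)
  finally have "k - card B1 \<le> card (X - (B1 \<union> B2))" using sub assms(3) by linarith
  then obtain E where E: "E \<subseteq> X - (B1 \<union> B2)" "card E = k - card B1"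
    by (meson obtain_subset_with_card_n)
  define G where "G = B1 \<union> E"
  have "finite E" using E \<open>finite X\<close> finite_subset by blast
  then have "card G = card B1 + card E"
    unfolding G_def using E fin by (intro card_Un_disjoint) auto
  then have G: "G \<in> ksubsets X k" "G \<noteq> {}"
    using E sub \<open>1 \<le> k\<close> unfolding G_def ksubsets_def by auto
  have "\<forall>A\<in>\<F>. A \<inter> G \<noteq> {}" using B1 unfolding transv_def G_def by blast
  moreover have "intersecting \<F>" using sat by (simp add: saturated_def)
  ultimately have "intersecting (\<F> \<union> {G})"
    using G(2) unfolding intersecting_def by blast
  then have "G \<in> \<F>" using sat G(1) unfolding saturated_def by blast
  then have "B2 \<inter> G \<noteq> {}" using B2 unfolding transv_def by blast
  moreover have "B2 \<inter> G = {}" using disj E unfolding G_def by blast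
  ultimately show False by blast
qed

lemma saturated_top_layer_subset:
  assumes sat: "saturated X k \<F>" and "finite X" "F \<in> \<F>"
    and top: "Max {card B | B. B \<in> minTransv X k \<F> \<and> B \<subseteq> F} = l"
  shows "\<exists>B\<in>layer (minTransv X k \<F>) l. B \<subseteq> F"
proof -
  let ?C = "{card B | B. B \<in> minTransv X k \<F> \<and> B \<subseteq> F}"
  have "finite F" using saturated_memberD[OF sat \<open>F \<in> \<F>\<close>] \<open>finite X\<close> finite_subset by blast
  then have "?C \<subseteq> {..card F}" by (auto intro: card_mono)
  moreover have "?C \<noteq> {}"
    using exists_minTransv_subset[OF saturated_member_transv[OF sat \<open>F \<in> \<F>\<close>] \<open>finite X\<close>]
    by blast
  ultimately have "l \<in> ?C" using top Max_in[of ?C] finite_subset by blast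
  then show ?thesis unfolding layer_def by blast
qed

lemma saturated_intersection_split:
  assumes sat: "saturated X k \<F>" and "finite X" and F: "F \<in> \<F>" "F' \<in> \<F>"
    and top: "Max {card B | B. B \<in> minTransv X k \<F> \<and> B \<subseteq> F} = l"
  shows "\<exists>B S T. F \<inter> F' = S \<union> T \<and> B \<in> layer (minTransv X k \<F>) l \<and> S \<subseteq> B \<and> S \<noteq> {}
           \<and> T \<subseteq> X \<and> card T \<le> k - l"
proof -
  obtain B where B: "B \<in> layer (minTransv X k \<F>) l" "B \<subseteq> F"
    using saturated_top_layer_subset[OF sat \<open>finite X\<close> F(1) top] by blast
  have FX: "F \<subseteq> X" "card F = k" using saturated_memberD[OF sat F(1)] by auto
  have "finite F" using FX \<open>finite X\<close> finite_subset by blast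
  then have "card ((F - B) \<inter> F') \<le> card (F - B)" by (intro card_mono) auto
  also have "card (F - B) = k - l"
    using card_Diff_subset[OF finite_subset[OF B(2) \<open>finite F\<close>] B(2)] B(1) FX
    unfolding layer_def by simp
  finally have "card ((F - B) \<inter> F') \<le> k - l" .
  moreover have "B \<inter> F' \<noteq> {}"
    using B F(2) unfolding layer_def minTransv_def transv_def by blast
  moreover have "F \<inter> F' = (B \<inter> F') \<union> ((F - B) \<inter> F')" using B by blast
  ultimately show ?thesis using B FX by blast
qed

lemma saturated_intersections_card_le:
  assumes sat: "saturated X k \<F>" and "finite X"
  shows "card {F \<inter> F' | F F'. F \<in> \<F> \<and> Max {card B | B. B \<in> minTransv X k \<F> \<and> B \<subseteq> F} = l
                  \<and> F' \<in> \<F>}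
         \<le> (2 ^ l - 1) * card (layer (minTransv X k \<F>) l) * (\<Sum>i\<in>{0..k - l}. card X choose i)"
    (is "card ?\<J> \<le> _")
proof -
  let ?P = "layer (minTransv X k \<F>) l" and ?T = "{T. T \<subseteq> X \<and> card T \<le> k - l}"
  let ?U = "{S \<union> T | B S T. B \<in> ?P \<and> S \<subseteq> B \<and> S \<noteq> {} \<and> T \<in> ?T}"
  have P: "B \<subseteq> X \<and> finite B \<and> card B = l" if "B \<in> ?P" for B
    using that \<open>finite X\<close> finite_subset[of B X] unfolding layer_def minTransv_def transv_def by blast
  have "?U \<subseteq> Pow X" using P by blast
  then have "finite ?U" using \<open>finite X\<close> finite_subset by blast
  moreover have "?\<J> \<subseteq> ?U"
  proof
    fix x assume "x \<in> ?\<J>"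
    then obtain F F' where "x = F \<inter> F'" "F \<in> \<F>" "F' \<in> \<F>"
      "Max {card B | B. B \<in> minTransv X k \<F> \<and> B \<subseteq> F} = l"
      by blast
    then show "x \<in> ?U" using saturated_intersection_split[OF sat \<open>finite X\<close>] by simp
  qed
  ultimately have "card ?\<J> \<le> card ?U" by (rule card_mono)
  also have "\<dots> \<le> (2 ^ l - 1) * card ?P * card ?T"
  proof (rule card_nonempty_subset_unions_le)
    have "?P \<subseteq> Pow X" using P by blast
    then show "finite ?P" using \<open>finite X\<close> finite_subset by blast
    show "finite ?T" using \<open>finite X\<close> by simp
  qed (use P in blast)
  finally show ?thesis using card_subsets_card_le[OF \<open>finite X\<close>] by simp
qed

lemma saturated_layer_branching:
  assumes sat: "saturated X k \<F>" and "finite X" "2 * k \<le> card X" "2 \<le> l" "l \<le> k"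
    and cover: "2 \<le> cover_number (layer_le (minTransv X k \<F>) l)"
    and B: "B \<in> layer (minTransv X k \<F>) l" "S \<subseteq> B" "card S < l"
  shows "\<exists>A. finite A \<and> card A \<le> (if card S < 2 then l else k) \<and> A \<inter> S = {}
             \<and> (\<forall>B'\<in>layer (minTransv X k \<F>) l. S \<subseteq> B' \<longrightarrow> A \<inter> B' \<noteq> {})"
proof -
  let ?\<B> = "minTransv X k \<F>"
  have transv: "B \<in> transv X k \<F>" if "B \<in> ?\<B>" for B
    using that unfolding minTransv_def by blast
  then have \<B>: "finite B" "\<forall>F\<in>\<F>. B \<inter> F \<noteq> {}" if "B \<in> ?\<B>" for B
    using that finite_subset[of B X] \<open>finite X\<close> unfolding transv_def by blast+
  have "finite S" using B \<B>(1) finite_subset unfolding layer_def by blast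
  show ?thesis
  proof (cases "card S < 2")
    case True
    then obtain H where H: "H \<in> layer_le ?\<B> l" "H \<inter> S = {}"
      using cover_number_ge_2_imp_disjoint[OF cover \<open>finite S\<close>] by auto
    then have "H \<in> ?\<B>" "card H \<le> l" unfolding layer_le_def by auto
    moreover have "H \<inter> B' \<noteq> {}" if "B' \<in> ?\<B>" for B'
      using saturated_transv_intersect[OF sat \<open>finite X\<close> \<open>2 * k \<le> card X\<close> _ transv transv]
        \<open>H \<in> ?\<B>\<close> that \<open>2 \<le> l\<close> \<open>l \<le> k\<close> by simp
    ultimately show ?thesis using True H(2) \<B>(1) unfolding layer_def
      by (intro exI[of _ H]) auto
  next
    case False
    have "S \<subset> B" using B unfolding layer_def by auto
    then obtain F where F: "F \<in> \<F>" "S \<inter> F = {}"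
      using minTransv_psubset_misses[OF _ _ \<open>finite X\<close>] B(1) unfolding layer_def by blast
    have "finite F" "card F = k"
      using saturated_memberD[OF sat F(1)] finite_subset \<open>finite X\<close> by auto
    moreover have "F \<inter> B' \<noteq> {}" if "B' \<in> layer ?\<B> l" for B'
      using \<B>(2) that F(1) unfolding layer_def by blast
    ultimately show ?thesis using False F(2) by (intro exI[of _ F]) auto
  qed
qed

lemma saturated_layer_card_le:
  assumes sat: "saturated X k \<F>" and "finite X" "2 * k \<le> card X" "2 \<le> l" "l \<le> k"
    and cover: "2 \<le> cover_number (layer_le (minTransv X k \<F>) l)"
  shows "card (layer (minTransv X k \<F>) l) \<le> l ^ 2 * k ^ (l - 2)"
proof -
  have "card (layer (minTransv X k \<F>) l) \<le> (\<Prod>j<l. if j < 2 then l else k)"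
  proof (rule card_le_prod_by_branching)
    fix B assume "B \<in> layer (minTransv X k \<F>) l"
    then show "finite B \<and> card B = l"
      using \<open>finite X\<close> finite_subset[of B X] unfolding layer_def minTransv_def transv_def by blast
  qed (fact saturated_layer_branching[OF assms])
  moreover obtain i where "l = Suc (Suc i)" using \<open>2 \<le> l\<close> by (metis add_2_eq_Suc le_Suc_ex)
  then have "(\<Prod>j<l. if j < 2 then l else k) = l ^ 2 * k ^ (l - 2)"
    by (simp only: prod_lessThan_if_less_two) simp
  ultimately show ?thesis by simp
qed

theorem lemma3p1:
  fixes n k t l :: nat and \<F> \<B> :: "nat set set"
  and Fl :: "nat \<Rightarrow> nat set set" and \<I> :: "nat set set"
  assumes "k \<ge> 2" and "n > 2 * k"
    and sat: "saturated {1..n} k \<F>"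
    and B_def: "\<B> = minTransv {1..n} k \<F>"
    and t_def: "t = Min (card ` \<B>)"
    and "t \<ge> 2"
    and Fl_def: "\<And>j. Fl j = {F \<in> \<F>. Max {card B | B. B \<in> \<B> \<and> B \<subseteq> F} = j}"
    and I_def: "\<I> = {F \<inter> F' | F F'. F \<in> Fl l \<and> F' \<in> (\<Union>j\<in>{t..l}. Fl j)}"
    and "t \<le> l" and "l \<le> k"
    and "cover_number (layer_le \<B> l) \<ge> 2"
  shows "card \<I> \<le> (2 ^ l - 1) * card (layer \<B> l) * (\<Sum>i\<in>{0..k - l}. n choose i)
       \<and> (2 ^ l - 1) * card (layer \<B> l) * (\<Sum>i\<in>{0..k - l}. n choose i)
           < 2 ^ l * l ^ 2 * k ^ (l - 2) * (\<Sum>i\<in>{0..k - l}. n choose i)"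
proof -
  let ?s = "\<Sum>i\<in>{0..k - l}. n choose i" and ?L = "l ^ 2 * k ^ (l - 2)"
  let ?\<J> = "{F \<inter> F' | F F'. F \<in> \<F> \<and> Max {card B | B. B \<in> \<B> \<and> B \<subseteq> F} = l \<and> F' \<in> \<F>}"
  have "?\<J> \<subseteq> Pow {1..n}" using saturated_memberD(1)[OF sat] by blast
  then have "finite ?\<J>" by (rule finite_subset) simp
  moreover have "\<I> \<subseteq> ?\<J>" unfolding I_def Fl_def by blast
  ultimately have "card \<I> \<le> card ?\<J>" by (rule card_mono)
  also have "\<dots> \<le> (2 ^ l - 1) * card (layer \<B> l) * ?s"
    using saturated_intersections_card_le[OF sat finite_atLeastAtMost, where l = l]
    unfolding B_def by simp
  finally have intersections: "card \<I> \<le> (2 ^ l - 1) * card (layer \<B> l) * ?s" .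
  have "2 \<le> l" "2 * k \<le> card {1..n}" using \<open>t \<ge> 2\<close> \<open>t \<le> l\<close> \<open>n > 2 * k\<close> by simp_all
  then have "card (layer \<B> l) \<le> ?L"
    using saturated_layer_card_le[OF sat finite_atLeastAtMost _ _ \<open>l \<le> k\<close>]
      \<open>cover_number (layer_le \<B> l) \<ge> 2\<close>[unfolded B_def]
    unfolding B_def by simp
  then have "(2 ^ l - 1) * card (layer \<B> l) \<le> (2 ^ l - 1) * ?L" by (rule mult_le_mono2)
  also have "\<dots> < 2 ^ l * ?L"
    using \<open>k \<ge> 2\<close> \<open>2 \<le> l\<close> by (intro mult_less_mono1) simp_all
  finally have "(2 ^ l - 1) * card (layer \<B> l) < 2 ^ l * ?L" .
  moreover have "0 < ?s" by (simp add: sum_pos2[of _ 0])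
  ultimately show ?thesis using intersections by (simp add: mult.assoc)
qed

end
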